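(* Let $\mathcal{K}$ be a continuous unitary representation of $\overline{\mathfrak{S}}_\infty$ in a Hilbert space $\mathcal{H}$, let $n\ge 0$ be an integer, and let $P_n$ be the weak-operator limit of $\mathcal{K}({}^n\sigma_m)$ as $m\to\infty$. Then $\mathcal{K}(s)P_n=P_n$ for every $s\in\mathfrak{S}(n,\infty)$.
   Context: $\overline{\mathfrak{S}}_\infty$ is the group of all bijections of $\mathbb{N}$, with the Polish topology in which the subgroups $\mathfrak{S}(n,\infty)=\{s: s(k)=k \text{ for } k=1,\dots,n\}$ form a fundamental system of neighborhoods of the identity; continuity of $\mathcal{K}$ means $\lim_{k\to\infty}\sup_{s\in\mathfrak{S}(k,\infty)}\|\mathcal{K}(s)\eta-\eta\|=0$ for each $\eta\in\mathcal{H}$. $(k\;j)$ denotes the transposition of $k$ and $j$, and ${}^n\sigma_m=(n+1\;\;n+m+1)(n+2\;\;n+m+2)\cdots(n+m\;\;n+2m)$. The weak-operator limit $P_n=\lim_{m\to\infty}\mathcal{K}({}^n\sigma_m)$ exists. *)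

theory Defs
  imports "HOL-Analysis.Analysis"
begin

text \<open>Indexing convention: the paper's \<open>\<nat> = {1,2,...}\<close> is identified with
  Isabelle's \<open>nat = {0,1,...}\<close> via \<open>k \<mapsto> k-1\<close>.\<close>

definition Sfix :: "nat \<Rightarrow> (nat \<Rightarrow> nat) set" where
  "Sfix n = {s. bij s \<and> (\<forall>k<n. s k = k)}"

text \<open>\<open>sigma n m\<close> is the paper's \<open>\<^sup>n\<sigma>\<^sub>m\<close>, the product of the transpositions
  \<open>(n+i  n+m+i)\<close>, \<open>i = 1..m\<close> (0-based here: \<open>n+i \<leftrightarrow> n+m+i\<close>, \<open>i < m\<close>).\<close>
definition sigma :: "nat \<Rightarrow> nat \<Rightarrow> nat \<Rightarrow> nat" where
  "sigma n m k = (if n \<le> k \<and> k < n + m then k + m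
                  else if n + m \<le> k \<and> k < n + 2 * m then k - m else k)"

definition unitary_op :: "('h::real_normed_vector \<Rightarrow> 'h) \<Rightarrow> bool" where
  "unitary_op U \<longleftrightarrow> bounded_linear U \<and> surj U \<and> (\<forall>x. norm (U x) = norm x)"

definition unitary_rep :: "((nat \<Rightarrow> nat) \<Rightarrow> 'h::real_normed_vector \<Rightarrow> 'h) \<Rightarrow> bool" where
  "unitary_rep K \<longleftrightarrow> (\<forall>s. bij s \<longrightarrow> unitary_op (K s))
     \<and> K id = id \<and> (\<forall>s t. bij s \<longrightarrow> bij t \<longrightarrow> K (s \<circ> t) = K s \<circ> K t)"

definition continuous_rep :: "((nat \<Rightarrow> nat) \<Rightarrow> 'h::real_normed_vector \<Rightarrow> 'h) \<Rightarrow> bool" where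
  "continuous_rep K \<longleftrightarrow>
     (\<forall>\<eta>. (\<lambda>k. SUP s\<in>Sfix k. norm (K s \<eta> - \<eta>)) \<longlonglongrightarrow> 0)"

end

theory Submission
  imports Defs
begin

text \<open>A finitary \<open>u \<in> Sfix n\<close> satisfies \<open>u \<circ> \<sigma>\<^sub>m = \<sigma>\<^sub>m \<circ> w\<^sub>m\<close> with
  \<open>w\<^sub>m = \<sigma>\<^sub>m \<circ> u \<circ> \<sigma>\<^sub>m \<in> Sfix (n + m)\<close> for large \<open>m\<close>, so by continuity
  \<open>K u (K \<sigma>\<^sub>m x) - K \<sigma>\<^sub>m x\<close> tends to \<open>0\<close> in norm, and passing to the weak limit gives
  \<open>K u (P x) = P x\<close>.  Finitary permutations are dense in \<open>Sfix n\<close>: every \<open>s \<in> Sfix n\<close>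
  factors as \<open>u \<circ> v\<close> with \<open>u \<in> Sfix n\<close> finitary and \<open>v \<in> Sfix N\<close> for arbitrarily large \<open>N\<close>;
  as \<open>u\<close> fixes \<open>P x\<close>, \<open>\<parallel>K s (P x) - P x\<parallel> = \<parallel>K v (P x) - P x\<parallel> \<rightarrow> 0\<close>.\<close>

definition finitary :: "(nat \<Rightarrow> nat) \<Rightarrow> bool" where
  "finitary u \<longleftrightarrow> (\<exists>B. \<forall>k\<ge>B. u k = k)"

lemma Sfix_antimono: "m \<le> n \<Longrightarrow> Sfix n \<subseteq> Sfix m"
  by (auto simp: Sfix_def)

lemma sigma_involution: "sigma n m \<circ> sigma n m = id"
  by (auto simp: sigma_def fun_eq_iff)

lemma sigma_sigma [simp]: "sigma n m (sigma n m k) = k"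
  using sigma_involution by (metis comp_apply id_apply)

lemma bij_sigma: "bij (sigma n m)"
  by (rule o_bij[OF sigma_involution sigma_involution])

lemma sigma_conj_in_Sfix:
  assumes "u \<in> Sfix n" and "\<forall>k\<ge>B. u k = k" and "B \<le> m"
  shows "sigma n m \<circ> u \<circ> sigma n m \<in> Sfix (n + m)"
proof -
  have "(sigma n m \<circ> u \<circ> sigma n m) k = k" if "k < n + m" for k
  proof (cases "k < n")
    case True
    then show ?thesis using assms(1) by (simp add: Sfix_def sigma_def)
  next
    case False
    then have "sigma n m k = k + m" using that by (simp add: sigma_def)
    moreover have "u (k + m) = k + m" using assms(2,3) by simp
    ultimately show ?thesis using False that by (simp add: sigma_def)
  qed
  moreover have "bij (sigma n m \<circ> u \<circ> sigma n m)"
    using assms(1) bij_sigma by (auto simp: Sfix_def intro: bij_comp)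
  ultimately show ?thesis by (simp add: Sfix_def)
qed

lemma finitary_approx:
  assumes "bij s"
  shows "\<exists>u. bij u \<and> finitary u \<and> (\<forall>k<N. u k = s k)"
proof (induction N)
  case 0
  have "finitary id" by (simp add: finitary_def)
  then show ?case by blast
next
  case (Suc N)
  then obtain u where u: "bij u" "finitary u" "\<forall>k<N. u k = s k" by blast
  then obtain B where B: "\<forall>k\<ge>B. u k = k" by (auto simp: finitary_def)
  \<comment> \<open>Correct the value at \<open>N\<close> by a transposition; injectivity keeps the values below \<open>N\<close>.\<close>
  define u' where "u' = Transposition.transpose (u N) (s N) \<circ> u"
  have "bij u'" unfolding u'_def using u(1) by (simp add: bij_comp)
  moreover have "\<forall>k\<ge>max B (max (u N + 1) (s N + 1)). u' k = k"
    using B by (auto simp: u'_def transpose_def)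
  then have "finitary u'" unfolding finitary_def by blast
  moreover have "u' k = s k" if "k < Suc N" for k
  proof (cases "k = N")
    case False
    then have "k < N" using that by simp
    have "u k = s k" using u(3) \<open>k < N\<close> by simp
    moreover have "s k \<noteq> s N" "u k \<noteq> u N"
      using \<open>k < N\<close> assms u(1) by (metis bij_is_inj inj_eq nat_neq_iff)+
    ultimately show ?thesis by (simp add: u'_def transpose_def)
  qed (simp add: u'_def)
  ultimately show ?case by blast
qed

lemma unitary_op_norm_diff:
  assumes "unitary_op U"
  shows "norm (U a - U b) = norm (a - b)"
proof -
  have "linear U" using assms by (simp add: unitary_op_def bounded_linear.linear)
  then show ?thesis using assms by (simp add: unitary_op_def linear_diff[symmetric])
qed

lemma unitary_op_inner:
  assumes "unitary_op U"
  shows "inner (U a) (U b) = inner a b"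
proof -
  have "linear U" using assms by (simp add: unitary_op_def bounded_linear.linear)
  then show ?thesis using assms
    by (simp add: dot_norm[of "U a"] dot_norm[of a] linear_add[symmetric] unitary_op_def)
qed

lemma unitary_rep_unitary_op: "unitary_rep K \<Longrightarrow> bij s \<Longrightarrow> unitary_op (K s)"
  by (simp add: unitary_rep_def)

lemma unitary_rep_comp: "unitary_rep K \<Longrightarrow> bij s \<Longrightarrow> bij t \<Longrightarrow> K (s \<circ> t) = K s \<circ> K t"
  by (simp add: unitary_rep_def)

lemma unitary_rep_adjoint:
  assumes "unitary_rep K" and "bij u"
  shows "inner (K u a) b = inner a (K (inv u) b)"
proof -
  have "K u \<circ> K (inv u) = K id"
    using assms unitary_rep_comp bij_imp_bij_inv by (metis bij_is_surj surj_iff)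
  then have "K u (K (inv u) b) = b" using assms(1) by (metis comp_apply id_apply unitary_rep_def)
  then show ?thesis
    using unitary_op_inner[OF unitary_rep_unitary_op[OF assms]] by metis
qed

lemma displacement_le_Sfix_SUP:
  assumes "unitary_rep K" and "w \<in> Sfix k"
  shows "norm (K w x - x) \<le> (SUP s\<in>Sfix k. norm (K s x - x))"
proof (rule cSUP_upper[OF assms(2)])
  have "norm (K s x - x) \<le> 2 * norm x" if "s \<in> Sfix k" for s
  proof -
    have "norm (K s x) = norm x"
      using that assms(1) by (simp add: Sfix_def unitary_rep_def unitary_op_def)
    then show ?thesis using norm_triangle_ineq4[of "K s x" x] by simp
  qed
  then show "bdd_above ((\<lambda>s. norm (K s x - x)) ` Sfix k)" by (rule bdd_aboveI2)
qed

lemma continuous_rep_tendsto: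
  assumes "unitary_rep K" and "continuous_rep K"
    and "eventually (\<lambda>k. w k \<in> Sfix k) sequentially"
  shows "(\<lambda>k. K (w k) x) \<longlonglongrightarrow> x"
proof (rule LIM_zero_cancel, rule Lim_null_comparison)
  show "(\<lambda>k. SUP s\<in>Sfix k. norm (K s x - x)) \<longlonglongrightarrow> 0"
    using assms(2) by (simp add: continuous_rep_def)
  show "\<forall>\<^sub>F k in sequentially. norm (K (w k) x - x) \<le> (SUP s\<in>Sfix k. norm (K s x - x))"
    using assms(3) by (rule eventually_mono) (rule displacement_le_Sfix_SUP[OF assms(1)])
qed

lemma finitary_fixes_weak_limit:
  fixes K :: "(nat \<Rightarrow> nat) \<Rightarrow> 'h::real_inner \<Rightarrow> 'h"
  assumes K: "unitary_rep K" and "continuous_rep K"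
    and lim: "\<forall>x y. (\<lambda>m. inner (K (sigma n m) x) y) \<longlonglongrightarrow> inner (P x) y"
    and u: "u \<in> Sfix n" "finitary u"
  shows "K u (P x) = P x"
proof -
  have "bij u" using u(1) by (simp add: Sfix_def)
  obtain B where B: "\<forall>k\<ge>B. u k = k" using u(2) by (auto simp: finitary_def)
  define w where "w m = sigma n m \<circ> u \<circ> sigma n m" for m
  have w_Sfix: "w m \<in> Sfix m" if "B \<le> m" for m
    using sigma_conj_in_Sfix[OF u(1) B that] Sfix_antimono[of m "n + m"] by (auto simp: w_def)
  have displacement: "norm (K u (K (sigma n m) x) - K (sigma n m) x) = norm (K (w m) x - x)" for m
  proof -
    have "bij (w m)" using w_Sfix[of "max B m"] \<open>bij u\<close> bij_sigma by (simp add: w_def bij_comp)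
    moreover have "u \<circ> sigma n m = sigma n m \<circ> w m"
      by (simp add: w_def fun_eq_iff)
    ultimately have "K u (K (sigma n m) x) = K (sigma n m) (K (w m) x)"
      using unitary_rep_comp[OF K] \<open>bij u\<close> bij_sigma by (metis comp_apply)
    then show ?thesis
      using unitary_op_norm_diff[OF unitary_rep_unitary_op[OF K bij_sigma]] by simp
  qed
  have "eventually (\<lambda>m. w m \<in> Sfix m) sequentially"
    using w_Sfix by (rule eventually_sequentiallyI)
  then have "(\<lambda>m. K (w m) x) \<longlonglongrightarrow> x"
    by (rule continuous_rep_tendsto[OF assms(1,2)])
  then have "(\<lambda>m. norm (K u (K (sigma n m) x) - K (sigma n m) x)) \<longlonglongrightarrow> 0"
    unfolding displacement by (simp add: tendsto_norm_zero_iff LIM_zero_iff)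
  then have strong: "(\<lambda>m. K u (K (sigma n m) x) - K (sigma n m) x) \<longlonglongrightarrow> 0"
    by (rule tendsto_norm_zero_cancel)
  have "inner (K u (P x) - P x) y = 0" for y
  proof -
    have "(\<lambda>m. inner (K u (K (sigma n m) x) - K (sigma n m) x) y) \<longlonglongrightarrow> 0"
      using tendsto_inner[OF strong tendsto_const] by simp
    moreover have "(\<lambda>m. inner (K u (K (sigma n m) x) - K (sigma n m) x) y)
        \<longlonglongrightarrow> inner (K u (P x) - P x) y"
      using tendsto_diff[OF lim[rule_format, of x "K (inv u) y"] lim[rule_format, of x y]]
      by (simp add: inner_diff_left unitary_rep_adjoint[OF K \<open>bij u\<close>])
    ultimately show ?thesis using LIMSEQ_unique by blast
  qed
  then show ?thesis using vector_eq_rdot[of "K u (P x) - P x" 0] by simp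
qed

lemma fixed_by_finitary_imp_fixed:
  assumes K: "unitary_rep K" and "continuous_rep K"
    and fixed: "\<forall>u\<in>Sfix n. finitary u \<longrightarrow> K u z = z"
    and s: "s \<in> Sfix n"
  shows "K s z = z"
proof -
  have "bij s" using s by (simp add: Sfix_def)
  have "\<forall>N. \<exists>u. bij u \<and> finitary u \<and> (\<forall>k<max N n. u k = s k)"
    using finitary_approx[OF \<open>bij s\<close>] by blast
  then obtain U where U: "\<And>N. bij (U N) \<and> finitary (U N) \<and> (\<forall>k<max N n. U N k = s k)"
    by metis
  define v where "v N = inv (U N) \<circ> s" for N
  have U_Sfix: "U N \<in> Sfix n" for N using U[of N] s by (simp add: Sfix_def)
  have v_Sfix: "v N \<in> Sfix N" for N
  proof -
    have "v N k = k" if "k < N" for k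
      using U[of N] that by (simp add: v_def inv_f_eq bij_is_inj)
    then show ?thesis
      using U[of N] \<open>bij s\<close> by (simp add: Sfix_def v_def bij_comp bij_imp_bij_inv)
  qed
  have displacement: "norm (K s z - z) = norm (K (v N) z - z)" for N
  proof -
    have "U N \<circ> v N = s"
      using U[of N] by (simp add: v_def fun_eq_iff bij_is_surj surj_f_inv_f)
    moreover have "bij (v N)" using v_Sfix[of N] by (simp add: Sfix_def)
    ultimately have "K s z = K (U N) (K (v N) z)"
      using unitary_rep_comp[OF K] U[of N] by (metis comp_apply)
    moreover have "K (U N) z = z" using fixed U_Sfix U by blast
    ultimately show ?thesis
      using unitary_op_norm_diff[OF unitary_rep_unitary_op[OF K], of "U N" "K (v N) z" z] U by simp
  qed
  have "(\<lambda>N. K (v N) z) \<longlonglongrightarrow> z"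
    using continuous_rep_tendsto[OF assms(1,2)] v_Sfix by simp
  then have "(\<lambda>N. norm (K (v N) z - z)) \<longlonglongrightarrow> 0"
    by (simp add: tendsto_norm_zero_iff LIM_zero_iff)
  then have "(\<lambda>N. norm (K s z - z)) \<longlonglongrightarrow> 0"
    by (simp only: displacement[symmetric])
  then show ?thesis by (simp add: LIMSEQ_const_iff)
qed

theorem lemma3:
  fixes K :: "(nat \<Rightarrow> nat) \<Rightarrow> 'h::{real_inner, complete_space} \<Rightarrow> 'h"
    and P :: "'h \<Rightarrow> 'h" and n :: nat
  assumes "unitary_rep K" and "continuous_rep K"
    and "\<forall>x y. (\<lambda>m. inner (K (sigma n m) x) y) \<longlonglongrightarrow> inner (P x) y"
  shows "\<forall>s\<in>Sfix n. K s \<circ> P = P"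
proof (intro ballI ext)
  fix s x
  assume "s \<in> Sfix n"
  have "\<forall>u\<in>Sfix n. finitary u \<longrightarrow> K u (P x) = P x"
    using finitary_fixes_weak_limit[OF assms] by blast
  then show "(K s \<circ> P) x = P x"
    using fixed_by_finitary_imp_fixed[OF assms(1,2) _ \<open>s \<in> Sfix n\<close>] by simp
qed

end
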